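(* Let $\mathbb{W}$ be a subgroup of the finite group $\mathbb{W}_3$ that contains $\mathbb{W}_3^{\mathfrak{A}}$, and let $G$ be a $\mathbb{W}$-invariant finite subgroup of $\mathbb{T}_3$. Then there exists $n\in\mathbb{N}$ such that one of the following three possibilities holds: \begin{enumerate} \item $G\cong\mu_n^3$; \item $n$ is even and $G\cong\mu_{n}^2\times\mu_{\frac{n}{2}}$; \item $n$ is divisible by $4$ and $G\cong\mu_{n}^2\times\mu_{\frac{n}{4}}$. \end{enumerate} Here $\mu_k$ denotes the cyclic group of order $k$.
   Context: Let $M_1=\mathbb{Z}^4/\langle h_1+h_2+h_3+h_4\rangle$ with the action of $\mathfrak{S}_4\times\mu_2$ where $\mathfrak{S}_4$ permutes the $h_i$ and the generator of $\mu_2$ acts as $-\mathrm{id}$. $M_3$ is the dual lattice of $M_1$ with the induced (contragredient) action of $\mathfrak{S}_4\times\mu_2$; equivalently $M_3$ is the root lattice of $A_3$ with its $\mathrm{Aut}(A_3)$-action. The image of this action in $\mathrm{GL}(M_3)\cong\mathrm{GL}_3(\mathbb{Z})$ is $\mathbb{W}_3$, and $\mathbb{W}_3^{\mathfrak{A}}$ is its unique subgroup isomorphic to $\mathfrak{A}_4$ (image of $\mathfrak{A}_4\times\{1\}$). $\mathbb{T}_3=\mathrm{Spec}\,\mathbb{C}[M_3]\cong\mathbb{G}_m^3$, on which $\mathrm{GL}(M_3)$ acts by group automorphisms via its action on characters. Concretely, $\mathbb{T}_3$ is the quotient of $\mathbb{T}_2=\mathbb{G}_m^3$ (coordinates $\mathsf{t}_1,\mathsf{t}_2,\mathsf{t}_3$)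 by the involution $(\mathsf{t}_1,\mathsf{t}_2,\mathsf{t}_3)\mapsto(-\mathsf{t}_1,-\mathsf{t}_2,-\mathsf{t}_3)$, with coordinates $\mathsf{t}_1\mathsf{t}_2,\mathsf{t}_1\mathsf{t}_3,\mathsf{t}_2\mathsf{t}_3$. *)

theory Defs
  imports "HOL-Algebra.Algebra" "HOL-Combinatorics.Permutations" "HOL-Library.Numeral_Type"
begin

text \<open>M_3: the dual of M_1 = Z^4 / <h1+h2+h3+h4>, realised as the sum-zero sublattice
  of Z^4 (the A_3 root lattice). Vectors of Z^4 are functions of type 4 => int.\<close>
definition M3 :: "(4 \<Rightarrow> int) set" where
  "M3 = {x. (\<Sum>i\<in>UNIV. x i) = 0}"

text \<open>Action of (sigma, eps) in S_4 x mu_2 on Z^4 (contragredient of the action on M_1):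
  permutation of coordinates and multiplication by eps = +1 / -1.\<close>
definition mact :: "(4 \<Rightarrow> 4) \<Rightarrow> int \<Rightarrow> (4 \<Rightarrow> int) \<Rightarrow> (4 \<Rightarrow> int)" where
  "mact s e x = (\<lambda>i. e * x (inv_into UNIV s i))"

text \<open>W_3: the image of S_4 x mu_2 in GL(M_3), elements as (extensional) maps M_3 -> M_3.\<close>
definition W3 :: "((4 \<Rightarrow> int) \<Rightarrow> (4 \<Rightarrow> int)) set" where
  "W3 = {restrict (mact s e) M3 | s e. s permutes UNIV \<and> (e = 1 \<or> e = -1)}"

definition W3A :: "((4 \<Rightarrow> int) \<Rightarrow> (4 \<Rightarrow> int)) set" where
  "W3A = {restrict (mact s 1) M3 | s. s permutes UNIV \<and> evenperm s}"

text \<open>Subgroups of W_3 (a finite group, so closure under composition and containing id suffices).\<close>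
definition is_subgroup_W3 :: "((4 \<Rightarrow> int) \<Rightarrow> (4 \<Rightarrow> int)) set \<Rightarrow> bool" where
  "is_subgroup_W3 W \<longleftrightarrow> W \<subseteq> W3 \<and> restrict id M3 \<in> W \<and>
     (\<forall>f\<in>W. \<forall>g\<in>W. compose M3 f g \<in> W)"

text \<open>The complex points of T_3 = Spec C[M_3]: group homomorphisms M_3 -> C^*,
  taken extensional (value 1 outside M_3), with pointwise multiplication.\<close>
definition T3_points :: "((4 \<Rightarrow> int) \<Rightarrow> complex) set" where
  "T3_points = {\<phi>. (\<forall>x\<in>M3. \<phi> x \<noteq> 0) \<and> (\<forall>x\<in>M3. \<forall>y\<in>M3. \<phi> (\<lambda>i. x i + y i) = \<phi> x * \<phi> y)
                   \<and> (\<forall>x. x \<notin> M3 \<longrightarrow> \<phi> x = 1)}"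

definition T3 :: "((4 \<Rightarrow> int) \<Rightarrow> complex) monoid" where
  "T3 = \<lparr>carrier = T3_points, monoid.mult = (\<lambda>\<phi> \<psi> x. \<phi> x * \<psi> x), one = (\<lambda>x. 1)\<rparr>"

text \<open>Action of g in GL(M_3) on T_3 via its action on characters: g . phi = phi o g^{-1}.\<close>
definition tact :: "((4 \<Rightarrow> int) \<Rightarrow> (4 \<Rightarrow> int)) \<Rightarrow> ((4 \<Rightarrow> int) \<Rightarrow> complex) \<Rightarrow> ((4 \<Rightarrow> int) \<Rightarrow> complex)" where
  "tact g \<phi> = (\<lambda>x. if x \<in> M3 then \<phi> (inv_into M3 g x) else 1)"

abbreviation mu :: "nat \<Rightarrow> int monoid" where
  "mu k \<equiv> integer_mod_group k"

end

theory Submission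
  imports Defs
begin

text \<open>In the coordinates \<open>\<phi> \<mapsto> (\<phi>(e\<^sub>0 - e\<^sub>3), \<phi>(e\<^sub>1 - e\<^sub>3), \<phi>(e\<^sub>2 - e\<^sub>3))\<close> of \<open>T\<^sub>3\<close>
  the group \<open>G\<close> becomes a finite subgroup \<open>Q\<close> of \<open>(\<complex>\<^sup>*)\<^sup>3\<close> that is stable under the
  actions of \<open>(0 1 2)\<close> and \<open>(0 3)(1 2)\<close>. Let \<open>\<mu>\<^sub>m = {a. (a, 1, 1) \<in> Q}\<close> and let \<open>\<mu>\<^sub>n\<close> be
  the image of the first projection. The symmetries give
  \<open>\<mu>\<^sub>m\<^sup>3 \<subseteq> Q \<subseteq> {(a, b, c) \<in> \<mu>\<^sub>n\<^sup>3. abc \<in> \<mu>\<^sub>m}\<close>, and \<open>m | n | 4m\<close> because \<open>(1, a\<^sup>2, a\<^sup>2) \<in> Q\<close>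
  for every \<open>(a, b, c) \<in> Q\<close>. A case analysis of exponents modulo \<open>4\<close> shows
  \<open>(\<zeta>\<^sub>n, \<zeta>\<^sub>n\<^sup>-\<^sup>1, 1) \<in> Q\<close>, which makes the second inclusion an equality. Finally the right hand
  side is isomorphic to \<open>\<mu>\<^sub>n\<^sup>2 \<times> \<mu>\<^sub>m\<close> via \<open>(i, j, l) \<mapsto> (\<zeta>\<^sub>n^i, \<zeta>\<^sub>n^j, \<zeta>\<^sub>n^(kl - i - j))\<close>
  with \<open>k = n/m\<close>.\<close>

lemma finite_mult_subgroup_eq_roots_unity:
  fixes H :: "complex set"
  assumes fin: "finite H" and one: "1 \<in> H" and nz: "0 \<notin> H"
    and mult: "\<And>x y. x \<in> H \<Longrightarrow> y \<in> H \<Longrightarrow> x * y \<in> H"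
    and inverse: "\<And>x. x \<in> H \<Longrightarrow> inverse x \<in> H"
  shows "H = {z. z ^ card H = 1}" and "card H > 0"
proof -
  show card_pos: "card H > 0" using fin one card_gt_0_iff by blast
  have "a ^ card H = 1" if a: "a \<in> H" for a
  proof -
    have a0: "a \<noteq> 0" using a nz by auto
    have "(*) a ` H = H"
    proof
      show "(*) a ` H \<subseteq> H" using mult a by auto
      show "H \<subseteq> (*) a ` H"
      proof
        fix h assume "h \<in> H"
        then have "h = a * (inverse a * h)" "inverse a * h \<in> H"
          using a0 a mult inverse by auto
        then show "h \<in> (*) a ` H" by blast
      qed
    qed
    then have "prod id H = prod ((*) a) H"
      using prod.reindex[of "(*) a" H id] a0 by (simp add: inj_on_def)
    also have "\<dots> = a ^ card H * prod id H" by (simp add: prod.distrib)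
    finally show ?thesis using fin nz by (auto simp: prod_zero_iff)
  qed
  then have sub: "H \<subseteq> {z. z ^ card H = 1}" by blast
  show "H = {z. z ^ card H = 1}"
    by (rule card_subset_eq[OF finite_roots_unity sub]) (use card_pos card_roots_unity_eq in auto)
qed

definition zeta :: "nat \<Rightarrow> complex" where
  "zeta n = cis (2 * pi / real n)"

lemma zeta_nonzero [simp]: "zeta n \<noteq> 0"
  by (simp add: zeta_def)

lemma zeta_pow: "zeta n ^ j = cis (2 * pi * real j / real n)"
  by (simp add: zeta_def DeMoivre mult_ac)

lemma zeta_pow_self: "n > 0 \<Longrightarrow> zeta n ^ n = 1"
  by (simp add: zeta_pow)

lemma root_unity_eq_zeta_pow:
  assumes "n > 0" "z ^ n = 1"
  obtains j where "j < n" "z = zeta n ^ j"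
proof -
  have "z \<in> (\<lambda>k. cis (2 * pi * real k / real n)) ` {..<n}"
    using bij_betw_roots_unity[OF assms(1)] assms(2) by (auto simp: bij_betw_def)
  then show ?thesis using that by (auto simp: zeta_pow)
qed

lemma zeta_powi_eq_iff:
  assumes n: "n > 0"
  shows "zeta n powi x = zeta n powi y \<longleftrightarrow> x mod int n = y mod int n"
proof -
  have reduce: "zeta n powi x = zeta n ^ nat (x mod int n)" for x
  proof -
    have "zeta n powi x = zeta n powi (int n * (x div int n)) * zeta n powi (x mod int n)"
      by (simp flip: power_int_add)
    also have "zeta n powi (int n * (x div int n)) = 1"
      using n by (simp add: power_int_mult zeta_pow_self)
    finally show ?thesis using n by (simp add: power_int_def)
  qed
  have inj: "inj_on (\<lambda>k. cis (2 * pi * real k / real n)) {..<n}"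
    using bij_betw_roots_unity[OF n] by (auto simp: bij_betw_def)
  have "nat (x mod int n) \<in> {..<n}" "nat (y mod int n) \<in> {..<n}"
    using n by (auto simp: nat_less_iff)
  then have "zeta n ^ nat (x mod int n) = zeta n ^ nat (y mod int n)
          \<longleftrightarrow> nat (x mod int n) = nat (y mod int n)"
    unfolding zeta_pow using inj_on_eq_iff[OF inj] by blast
  then show ?thesis using n by (auto simp: reduce nat_eq_iff2)
qed

lemma zeta_pow_eq_1_iff: "n > 0 \<Longrightarrow> zeta n ^ j = 1 \<longleftrightarrow> n dvd j"
  using zeta_powi_eq_iff[of n "int j" 0] by (simp add: power_int_of_nat dvd_eq_mod_eq_0 flip: of_nat_mod)

lemma zeta_powi_pow_self:
  assumes "n > 0" shows "(zeta n powi x) ^ n = 1"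
proof -
  have "(zeta n powi x) ^ n = (zeta n powi int n) powi x"
    by (simp add: mult.commute flip: power_int_of_nat power_int_mult)
  then show ?thesis using assms by (simp add: zeta_pow_self)
qed

type_synonym triple = "complex \<times> complex \<times> complex"

fun tmult :: "triple \<Rightarrow> triple \<Rightarrow> triple" where
  "tmult (a, b, c) (a', b', c') = (a * a', b * b', c * c')"

fun tinverse :: "triple \<Rightarrow> triple" where
  "tinverse (a, b, c) = (inverse a, inverse b, inverse c)"

fun tpower :: "triple \<Rightarrow> nat \<Rightarrow> triple" where
  "tpower (a, b, c) k = (a ^ k, b ^ k, c ^ k)"

fun tcycle :: "triple \<Rightarrow> triple" where
  "tcycle (a, b, c) = (c, a, b)"

fun tflip :: "triple \<Rightarrow> triple" where
  "tflip (a, b, c) = (inverse a, c * inverse a, b * inverse a)"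

definition root_triples :: "nat \<Rightarrow> nat \<Rightarrow> triple set" where
  "root_triples n m = {(a, b, c). a ^ n = 1 \<and> b ^ n = 1 \<and> c ^ n = 1 \<and> (a * b * c) ^ m = 1}"

text \<open>In the coordinates of \<open>T\<^sub>3\<close>, tcycle and tflip are the actions of \<open>(0 1 2)\<close> and
  \<open>(0 3)(1 2)\<close>, which generate \<open>A\<^sub>4\<close>.\<close>

locale stable_triples =
  fixes Q :: "triple set"
  assumes finite_Q: "finite Q"
    and one_mem: "(1, 1, 1) \<in> Q"
    and mult_mem: "x \<in> Q \<Longrightarrow> y \<in> Q \<Longrightarrow> tmult x y \<in> Q"
    and inverse_mem: "x \<in> Q \<Longrightarrow> tinverse x \<in> Q"
    and nonzero: "(a, b, c) \<in> Q \<Longrightarrow> a \<noteq> 0 \<and> b \<noteq> 0 \<and> c \<noteq> 0"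
    and cycle_mem: "x \<in> Q \<Longrightarrow> tcycle x \<in> Q"
    and flip_mem: "x \<in> Q \<Longrightarrow> tflip x \<in> Q"
begin

definition axis :: "complex set" where
  "axis = {a. (a, 1, 1) \<in> Q}"

definition proj :: "complex set" where
  "proj = fst ` Q"

definition m :: nat where
  "m = card axis"

definition n :: nat where
  "n = card proj"

lemma tpower_mem: "x \<in> Q \<Longrightarrow> tpower x k \<in> Q"
proof (induction k)
  case 0
  then show ?case using one_mem by (cases x) simp
next
  case (Suc k)
  then have "tmult x (tpower x k) \<in> Q" using mult_mem by blast
  then show ?case by (cases x) simp
qed

lemma
  shows axis_eq_roots: "axis = {z. z ^ m = 1}" and m_pos: "m > 0"
proof -
  have "axis \<subseteq> fst ` Q" unfolding axis_def by force
  then have "finite axis" using finite_Q finite_subset by blast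
  moreover have "1 \<in> axis" "0 \<notin> axis"
    using nonzero one_mem by (auto simp: axis_def)
  moreover have "x * y \<in> axis" if "x \<in> axis" "y \<in> axis" for x y
    using that mult_mem[of "(x, 1, 1)" "(y, 1, 1)"] by (simp add: axis_def)
  moreover have "inverse x \<in> axis" if "x \<in> axis" for x
    using that inverse_mem[of "(x, 1, 1)"] by (simp add: axis_def)
  ultimately show "axis = {z. z ^ m = 1}" "m > 0"
    unfolding m_def using finite_mult_subgroup_eq_roots_unity[of axis] by blast+
qed

lemma
  shows proj_eq_roots: "proj = {z. z ^ n = 1}" and n_pos: "n > 0"
proof -
  have "finite proj" using finite_Q by (simp add: proj_def)
  moreover have "1 \<in> proj" "0 \<notin> proj"
    unfolding proj_def using nonzero one_mem by force+
  moreover have "x * y \<in> proj" if xy: "x \<in> proj" "y \<in> proj" for x y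
  proof -
    obtain p q where "p \<in> Q" "q \<in> Q" "x = fst p" "y = fst q"
      using xy unfolding proj_def by blast
    then show ?thesis using mult_mem[of p q] unfolding proj_def by (cases p, cases q) force
  qed
  moreover have "inverse x \<in> proj" if x: "x \<in> proj" for x
  proof -
    obtain p where "p \<in> Q" "x = fst p" using x unfolding proj_def by blast
    then show ?thesis using inverse_mem[of p] unfolding proj_def by (cases p) force
  qed
  ultimately show "proj = {z. z ^ n = 1}" "n > 0"
    unfolding n_def using finite_mult_subgroup_eq_roots_unity[of proj] by blast+
qed

lemma axis_mem_iff: "(a, 1, 1) \<in> Q \<longleftrightarrow> a ^ m = 1"
  using axis_eq_roots by (auto simp: axis_def)

lemma coords_pow_n:
  assumes "(a, b, c) \<in> Q"
  shows "a ^ n = 1" "b ^ n = 1" "c ^ n = 1"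
proof -
  have "(a, b, c) \<in> Q" "(c, a, b) \<in> Q" "(b, c, a) \<in> Q"
    using assms cycle_mem[OF assms] cycle_mem[OF cycle_mem[OF assms]] by simp_all
  then have "{a, b, c} \<subseteq> proj" unfolding proj_def by force
  then show "a ^ n = 1" "b ^ n = 1" "c ^ n = 1" using proj_eq_roots by auto
qed

lemma roots_m_mem:
  assumes "a ^ m = 1" "b ^ m = 1" "c ^ m = 1"
  shows "(a, b, c) \<in> Q"
proof -
  have "(a, 1, 1) \<in> Q" "(b, 1, 1) \<in> Q" "(c, 1, 1) \<in> Q" using assms axis_mem_iff by auto
  then have "(a, 1, 1) \<in> Q" "(1, b, 1) \<in> Q" "(1, 1, c) \<in> Q"
    using cycle_mem[of "(b, 1, 1)"] cycle_mem[OF cycle_mem[of "(c, 1, 1)"]] by auto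
  then have "tmult (tmult (a, 1, 1) (1, b, 1)) (1, 1, c) \<in> Q" by (intro mult_mem)
  then show ?thesis by simp
qed

lemma prod_pow_m:
  assumes x: "(a, b, c) \<in> Q"
  shows "(a * b * c) ^ m = 1"
proof -
  define p where "p = a * b * c"
  have "tmult (tmult (a, b, c) (tcycle (a, b, c))) (tcycle (tcycle (a, b, c))) \<in> Q"
    by (intro mult_mem cycle_mem x)
  then have "(p, p, p) \<in> Q" by (simp add: p_def mult_ac)
  then have "tinverse (tflip (p, p, p)) \<in> Q" by (intro inverse_mem flip_mem)
  moreover have "p \<noteq> 0" using nonzero[OF x] by (simp add: p_def)
  ultimately have "(p, 1, 1) \<in> Q" by simp
  then show ?thesis using axis_mem_iff p_def by blast
qed

lemma square_mem:
  assumes x: "(a, b, c) \<in> Q"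
  shows "(1, a\<^sup>2, a\<^sup>2) \<in> Q"
proof -
  have "(1, a * b * c, a * b * c) \<in> Q" using roots_m_mem prod_pow_m[OF x] by simp
  then have "tinverse (tmult (tmult (a, b, c) (tflip (a, b, c))) (tinverse (1, a * b * c, a * b * c))) \<in> Q"
    by (intro inverse_mem mult_mem flip_mem x)
  then show ?thesis using nonzero[OF x] by (simp add: field_simps power2_eq_square)
qed

lemma pow_4m:
  assumes x: "(a, b, c) \<in> Q"
  shows "a ^ (4 * m) = 1"
proof -
  define t where "t = a\<^sup>2"
  have "(1, t, t) \<in> Q" using square_mem[OF x] t_def by simp
  then have "tcycle (tmult (tmult (1, t, t) (tcycle (1, t, t))) (tinverse (tcycle (tcycle (1, t, t))))) \<in> Q"
    by (intro cycle_mem mult_mem inverse_mem)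
  moreover have "t \<noteq> 0" using nonzero[OF x] t_def by simp
  ultimately have "(t\<^sup>2, 1, 1) \<in> Q" by (simp add: power2_eq_square)
  then show ?thesis using axis_mem_iff by (simp add: t_def flip: power_mult)
qed

lemma m_dvd_n: "m dvd n"
proof -
  have "(zeta m, 1, 1) \<in> Q" using axis_mem_iff zeta_pow_self[OF m_pos] by blast
  then have "zeta m ^ n = 1" using coords_pow_n by blast
  then show ?thesis using zeta_pow_eq_1_iff[OF m_pos] by simp
qed

lemma n_dvd_4m: "n dvd 4 * m"
proof -
  have "zeta n \<in> proj" using proj_eq_roots zeta_pow_self[OF n_pos] by simp
  then obtain b c where "(zeta n, b, c) \<in> Q" unfolding proj_def by force
  then have "zeta n ^ (4 * m) = 1" by (rule pow_4m)
  then show ?thesis using zeta_pow_eq_1_iff[OF n_pos] by simp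
qed

lemma zeta_pow_4_pow_m: "(zeta n ^ 4) ^ m = 1"
  using n_dvd_4m zeta_pow_eq_1_iff[OF n_pos] by (simp flip: power_mult)

text \<open>Since \<open>\<zeta>\<^sub>n\<^sup>4 \<in> \<mu>\<^sub>m\<close>, multiplying by elements of \<open>\<mu>\<^sub>m\<^sup>3 \<subseteq> Q\<close> normalises an element with
  first coordinate \<open>\<zeta>\<^sub>n\<close> so that its second exponent is below \<open>4\<close> and its coordinates
  multiply to \<open>1\<close>.\<close>

lemma normalised_mem: "\<exists>r<4. (zeta n, zeta n ^ r, inverse (zeta n ^ Suc r)) \<in> Q"
proof -
  define z where "z = zeta n"
  have "z \<in> proj" using proj_eq_roots zeta_pow_self[OF n_pos] by (simp add: z_def)
  then obtain b c where x: "(z, b, c) \<in> Q" unfolding proj_def by force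
  obtain j where "b = z ^ j"
    using root_unity_eq_zeta_pow[OF n_pos coords_pow_n(2)[OF x]] z_def by blast
  then have b: "b = z ^ (j mod 4) * (z ^ 4) ^ (j div 4)"
    by (simp flip: power_add power_mult)
  have "((z ^ 4) ^ (j div 4)) ^ m = ((z ^ 4) ^ m) ^ (j div 4)"
    by (simp flip: power_mult add: mult_ac)
  then have "((z ^ 4) ^ (j div 4)) ^ m = 1" by (simp add: zeta_pow_4_pow_m z_def)
  then have "(1, inverse ((z ^ 4) ^ (j div 4)), 1) \<in> Q"
    using roots_m_mem by (simp add: power_inverse)
  from mult_mem[OF x this] have y: "(z, z ^ (j mod 4), c) \<in> Q"
    using b by (simp add: z_def mult.assoc)
  define p where "p = z * z ^ (j mod 4) * c"
  have "p ^ m = 1" using prod_pow_m[OF y] unfolding p_def .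
  then have "(1, 1, inverse p) \<in> Q" using roots_m_mem by (simp add: power_inverse)
  from mult_mem[OF y this] have "(z, z ^ (j mod 4), c * inverse p) \<in> Q" by simp
  moreover have "c * inverse p = inverse (z ^ Suc (j mod 4))"
    using nonzero[OF x] by (simp add: p_def z_def field_simps)
  ultimately show ?thesis unfolding z_def by (intro exI[of _ "j mod 4"]) simp
qed

lemma generator_mem: "(zeta n, inverse (zeta n), 1) \<in> Q"
proof -
  define z where "z = zeta n"
  obtain r where "r < 4" and y: "(z, z ^ r, inverse (z ^ Suc r)) \<in> Q"
    using normalised_mem unfolding z_def by blast
  have z0: "z \<noteq> 0" by (simp add: z_def)
  have w: "(1, z\<^sup>2, z\<^sup>2) \<in> Q" using square_mem[OF y] .
  have "(z ^ 4) ^ m = 1" using zeta_pow_4_pow_m by (simp add: z_def)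
  then have t1: "(1, 1, z ^ 4) \<in> Q" and t2: "(1, inverse (z ^ 4), z ^ 4) \<in> Q"
    using roots_m_mem by (simp_all add: power_inverse)
  have "(z, inverse z, 1) \<in> Q \<or> (z, 1, inverse z) \<in> Q"
  proof -
    consider (r0) "r = 0" | (r1) "r = 1" | (r2) "r = 2" | (r3) "r = 3" using \<open>r < 4\<close> by linarith
    then show ?thesis
    proof cases
      case r0
      then show ?thesis using y by simp
    next
      case r1
      have "tmult (tmult (z, z, inverse (z ^ 2)) (tinverse (1, z\<^sup>2, z\<^sup>2))) (1, 1, z ^ 4) \<in> Q"
        using y w t1 r1 by (intro mult_mem inverse_mem) (simp_all add: power2_eq_square)
      then show ?thesis using z0 by (simp add: field_simps eval_nat_numeral)
    next
      case r2
      have "tmult (tmult (z, z\<^sup>2, inverse (z ^ 3)) (tinverse (1, z\<^sup>2, z\<^sup>2))) (1, 1, z ^ 4) \<in> Q"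
        using y w t1 r2 by (intro mult_mem inverse_mem) (simp_all add: eval_nat_numeral)
      then show ?thesis using z0 by (simp add: field_simps eval_nat_numeral)
    next
      case r3
      have "tmult (z, z ^ 3, inverse (z ^ 4)) (1, inverse (z ^ 4), z ^ 4) \<in> Q"
        using y t2 r3 by (intro mult_mem) simp_all
      then show ?thesis using z0 by (simp add: field_simps eval_nat_numeral)
    qed
  qed
  moreover have "(z, inverse z, 1) \<in> Q" if "(z, 1, inverse z) \<in> Q"
    using inverse_mem[OF cycle_mem[OF that]] by simp
  ultimately show ?thesis unfolding z_def by blast
qed

text \<open>Conversely every \<open>(a, b, c) \<in> \<mu>\<^sub>n\<^sup>3\<close> with \<open>abc \<in> \<mu>\<^sub>m\<close> lies in \<open>Q\<close>: writing
  \<open>a = \<zeta>\<^sup>i\<close>, \<open>b = \<zeta>\<^sup>j\<close>, it is \<open>(\<zeta>, \<zeta>\<^sup>-\<^sup>1, 1)\<^sup>i (1, \<zeta>, \<zeta>\<^sup>-\<^sup>1)\<^sup>i\<^sup>+\<^sup>j (1, 1, abc)\<close>.\<close>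

lemma eq_root_triples: "Q = root_triples n m"
proof
  show "Q \<subseteq> root_triples n m"
    using coords_pow_n prod_pow_m by (auto simp: root_triples_def)
next
  show "root_triples n m \<subseteq> Q"
  proof clarify
    fix a b c assume "(a, b, c) \<in> root_triples n m"
    then have h: "a ^ n = 1" "b ^ n = 1" "(a * b * c) ^ m = 1"
      by (auto simp: root_triples_def)
    define z where "z = zeta n"
    have z0: "z \<noteq> 0" by (simp add: z_def)
    obtain i where i: "a = z ^ i" using root_unity_eq_zeta_pow[OF n_pos h(1)] z_def by blast
    obtain j where j: "b = z ^ j" using root_unity_eq_zeta_pow[OF n_pos h(2)] z_def by blast
    have e: "(z, inverse z, 1) \<in> Q" using generator_mem by (simp add: z_def)
    have f: "(1, z, inverse z) \<in> Q" using cycle_mem[OF e] by simp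
    have "(1, 1, a * b * c) \<in> Q" using roots_m_mem h(3) by simp
    with e f have "tmult (tmult (tpower (z, inverse z, 1) i) (tpower (1, z, inverse z) (i + j)))
        (1, 1, a * b * c) \<in> Q"
      by (intro mult_mem tpower_mem)
    then show "(a, b, c) \<in> Q"
      using i j z0 by (simp add: power_add power_inverse field_simps)
  qed
qed

lemma classification: "\<exists>n m. 0 < m \<and> m dvd n \<and> n dvd 4 * m \<and> Q = root_triples n m"
  using m_pos m_dvd_n n_dvd_4m eq_root_triples by blast

end


lemma dvd_four_multiple_cases:
  fixes m n :: nat
  assumes "0 < m" "m dvd n" "n dvd 4 * m"
  shows "n = m \<or> n = 2 * m \<or> n = 4 * m"
proof -
  obtain k where n: "n = m * k" using assms(2) by blast
  then have "k dvd 4" using assms(1,3) by (simp add: mult.commute[of 4])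
  moreover have "k \<le> 4" "0 < k" "k \<noteq> 3" using \<open>k dvd 4\<close> by (auto intro: dvd_imp_le Nat.gr0I)
  ultimately have "k = 1 \<or> k = 2 \<or> k = 4" by (auto simp: le_Suc_eq numeral_eq_Suc)
  then show ?thesis using n by auto
qed

definition torus3 :: "triple monoid" where
  "torus3 = \<lparr>carrier = {(a, b, c). a \<noteq> 0 \<and> b \<noteq> 0 \<and> c \<noteq> 0}, monoid.mult = tmult, one = (1, 1, 1)\<rparr>"

lemma group_torus3: "group torus3"
proof (rule groupI)
  fix x assume "x \<in> carrier torus3"
  then show "\<exists>y\<in>carrier torus3. y \<otimes>\<^bsub>torus3\<^esub> x = \<one>\<^bsub>torus3\<^esub>"
    by (intro bexI[of _ "tinverse x"]) (cases x, simp add: torus3_def)+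
qed (simp_all add: torus3_def split_paired_all mult_ac)

definition zeta_triple :: "nat \<Rightarrow> nat \<Rightarrow> int \<times> int \<times> int \<Rightarrow> triple" where
  "zeta_triple n k = (\<lambda>(i, j, l). (zeta n powi i, zeta n powi j, zeta n powi (int k * l - i - j)))"

context
  fixes n k m :: nat
  assumes n_eq: "n = k * m" and m_pos: "0 < m" and k_pos: "0 < k"
begin

private lemma n_pos: "0 < n"
  using n_eq m_pos k_pos by simp

lemma zeta_triple_mem: "zeta_triple n k (i, j, l) \<in> root_triples n m"
proof -
  have "zeta n powi i * zeta n powi j * zeta n powi (int k * l - i - j) = zeta n powi (int k * l)"
    by (simp flip: power_int_add)
  also have "(zeta n powi (int k * l)) ^ m = (zeta n powi int n) powi l"
    by (simp add: n_eq mult_ac flip: power_int_of_nat power_int_mult)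
  also have "\<dots> = 1" by (simp add: zeta_pow_self n_pos)
  finally show ?thesis
    by (simp add: zeta_triple_def root_triples_def zeta_powi_pow_self n_pos)
qed

lemma zeta_triple_mult:
  "zeta_triple n k ((i + i') mod int n, (j + j') mod int n, (l + l') mod int m)
     = tmult (zeta_triple n k (i, j, l)) (zeta_triple n k (i', j', l'))"
proof -
  have "int k * ((l + l') mod int m) = (int k * (l + l')) mod int n"
    unfolding n_eq of_nat_mult by (rule mult_mod_right)
  then have "(int k * ((l + l') mod int m) - (i + i') mod int n - (j + j') mod int n) mod int n
      = (int k * (l + l') - (i + i') - (j + j')) mod int n"
    by (metis mod_diff_eq mod_diff_left_eq)
  also have "int k * (l + l') - (i + i') - (j + j') = (int k * l - i - j) + (int k * l' - i' - j')"
    by (simp add: algebra_simps)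
  finally show ?thesis
    using zeta_powi_eq_iff[OF n_pos]
    by (simp add: zeta_triple_def flip: power_int_add)
qed

lemma zeta_triple_inj_on: "inj_on (zeta_triple n k) ({0..<int n} \<times> {0..<int n} \<times> {0..<int m})"
proof (rule inj_onI)
  fix x y
  assume box: "x \<in> {0..<int n} \<times> {0..<int n} \<times> {0..<int m}"
    "y \<in> {0..<int n} \<times> {0..<int n} \<times> {0..<int m}"
    and eq: "zeta_triple n k x = zeta_triple n k y"
  obtain i j l i' j' l' where xy: "x = (i, j, l)" "y = (i', j', l')" by (cases x, cases y)
  have "i mod int n = i' mod int n" "j mod int n = j' mod int n"
    and "(int k * l - i - j) mod int n = (int k * l' - i' - j') mod int n"
    using eq zeta_powi_eq_iff[OF n_pos] by (auto simp: zeta_triple_def xy)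
  moreover from this have "i = i'" "j = j'" using box by (simp_all add: xy)
  ultimately have "int k * int m dvd int k * (l - l')"
    by (simp add: n_eq mod_eq_dvd_iff algebra_simps)
  then have "l mod int m = l' mod int m"
    using k_pos by (simp add: mod_eq_dvd_iff)
  then show "x = y" using box \<open>i = i'\<close> \<open>j = j'\<close> by (simp add: xy)
qed

lemma zeta_triple_image:
  "zeta_triple n k ` ({0..<int n} \<times> {0..<int n} \<times> {0..<int m}) = root_triples n m"
proof
  show "zeta_triple n k ` ({0..<int n} \<times> {0..<int n} \<times> {0..<int m}) \<subseteq> root_triples n m"
    using zeta_triple_mem by auto
next
  show "root_triples n m \<subseteq> zeta_triple n k ` ({0..<int n} \<times> {0..<int n} \<times> {0..<int m})"
  proof clarify
    fix a b c assume "(a, b, c) \<in> root_triples n m"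
    then have h: "a ^ n = 1" "b ^ n = 1" "c ^ n = 1" "(a * b * c) ^ m = 1"
      by (auto simp: root_triples_def)
    obtain i where i: "i < n" "a = zeta n ^ i" using root_unity_eq_zeta_pow[OF n_pos h(1)] .
    obtain j where j: "j < n" "b = zeta n ^ j" using root_unity_eq_zeta_pow[OF n_pos h(2)] .
    obtain d where d: "d < n" "c = zeta n ^ d" using root_unity_eq_zeta_pow[OF n_pos h(3)] .
    have "zeta n ^ ((i + j + d) * m) = 1" using h(4) i j d by (simp add: power_add power_mult)
    then have "k * m dvd (i + j + d) * m" using zeta_pow_eq_1_iff[OF n_pos] n_eq by simp
    then obtain t where t: "i + j + d = k * t" using m_pos by (auto elim: dvdE)
    define l where "l = int t mod int m"
    have "int k * l = (int k * int t) mod int n"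
      unfolding l_def n_eq of_nat_mult by (rule mult_mod_right)
    then have "(int k * l - int i - int j) mod int n = int d mod int n"
      using t by (metis mod_diff_left_eq add_diff_cancel_left' diff_diff_eq of_nat_add of_nat_mult)
    then have "zeta n powi (int k * l - int i - int j) = zeta n powi int d"
      unfolding zeta_powi_eq_iff[OF n_pos] .
    then have "zeta_triple n k (int i, int j, l) = (a, b, c)"
      using i j d by (simp add: zeta_triple_def power_int_of_nat)
    moreover have "(int i, int j, l) \<in> {0..<int n} \<times> {0..<int n} \<times> {0..<int m}"
      using i j m_pos by (simp add: l_def)
    ultimately show "(a, b, c) \<in> zeta_triple n k ` ({0..<int n} \<times> {0..<int n} \<times> {0..<int m})"
      by (metis image_eqI)
  qed
qed

lemma zeta_triple_iso:
  "zeta_triple n k \<in> iso (DirProd (mu n) (DirProd (mu n) (mu m))) (torus3\<lparr>carrier := root_triples n m\<rparr>)"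
proof -
  have carrier: "carrier (DirProd (mu n) (DirProd (mu n) (mu m)))
      = {0..<int n} \<times> {0..<int n} \<times> {0..<int m}"
    using n_pos m_pos by (simp add: carrier_integer_mod_group)
  have "zeta_triple n k \<in> hom (DirProd (mu n) (DirProd (mu n) (mu m))) (torus3\<lparr>carrier := root_triples n m\<rparr>)"
    unfolding carrier by (rule homI) (auto simp: zeta_triple_mem torus3_def zeta_triple_mult)
  then show ?thesis
    unfolding iso_def bij_betw_def carrier using zeta_triple_inj_on zeta_triple_image by simp
qed

end

lemma exhaust_4: "(x :: 4) = 0 \<or> x = 1 \<or> x = 2 \<or> x = 3"
proof (induct x)
  case (of_int z)
  then have "z = 0 \<or> z = 1 \<or> z = 2 \<or> z = 3" by fastforce
  then show ?case by auto
qed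

lemma M3_iff: "v \<in> M3 \<longleftrightarrow> v 0 + v 1 + v 2 + v 3 = 0"
proof -
  have UNIV_4: "(UNIV :: 4 set) = {0, 1, 2, 3}" using exhaust_4 by auto
  show ?thesis unfolding M3_def UNIV_4 by (simp add: add.assoc)
qed

lemma add_mem_M3: "v \<in> M3 \<Longrightarrow> w \<in> M3 \<Longrightarrow> (\<lambda>i. v i + w i) \<in> M3"
  by (simp add: M3_iff)

lemma scale_mem_M3: "v \<in> M3 \<Longrightarrow> (\<lambda>i. c * v i) \<in> M3"
  by (simp add: M3_iff flip: distrib_left)

lemma permute_mem_M3:
  assumes "s permutes UNIV" "v \<in> M3"
  shows "v \<circ> s \<in> M3"
  using assms sum.permute[OF assms(1), of v] by (simp add: M3_def)

definition basis_M3 :: "4 \<Rightarrow> 4 \<Rightarrow> int" where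
  "basis_M3 i = (\<lambda>j. if j = i then 1 else if j = 3 then -1 else 0)"

lemma basis_M3_apply:
  "basis_M3 0 0 = 1" "basis_M3 0 1 = 0" "basis_M3 0 2 = 0" "basis_M3 0 3 = -1"
  "basis_M3 1 0 = 0" "basis_M3 1 1 = 1" "basis_M3 1 2 = 0" "basis_M3 1 3 = -1"
  "basis_M3 2 0 = 0" "basis_M3 2 1 = 0" "basis_M3 2 2 = 1" "basis_M3 2 3 = -1"
  by (simp_all add: basis_M3_def)

lemma basis_M3_mem: "basis_M3 0 \<in> M3" "basis_M3 1 \<in> M3" "basis_M3 2 \<in> M3"
  by (simp_all add: M3_iff basis_M3_apply)

lemma M3_basis_expansion:
  assumes "v \<in> M3"
  shows "v = (\<lambda>i. v 0 * basis_M3 0 i + (v 1 * basis_M3 1 i + v 2 * basis_M3 2 i))"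
proof
  fix i :: 4
  have "v 3 = - v 0 - v 1 - v 2" using assms by (simp add: M3_iff)
  then show "v i = v 0 * basis_M3 0 i + (v 1 * basis_M3 1 i + v 2 * basis_M3 2 i)"
    using exhaust_4[of i] by (auto simp: basis_M3_apply)
qed

lemma T3_points_add:
  "\<phi> \<in> T3_points \<Longrightarrow> v \<in> M3 \<Longrightarrow> w \<in> M3 \<Longrightarrow> \<phi> (\<lambda>i. v i + w i) = \<phi> v * \<phi> w"
  unfolding T3_points_def by blast

lemma T3_points_nonzero: "\<phi> \<in> T3_points \<Longrightarrow> v \<in> M3 \<Longrightarrow> \<phi> v \<noteq> 0"
  unfolding T3_points_def by blast

lemma T3_points_scale:
  assumes \<phi>: "\<phi> \<in> T3_points" and w: "w \<in> M3"
  shows "\<phi> (\<lambda>i. c * w i) = \<phi> w powi c"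
proof -
  have nat_scale: "\<phi> (\<lambda>i. int k * w i) = \<phi> w ^ k" for k
  proof (induction k)
    case 0
    have "(\<lambda>i::4. 0::int) \<in> M3" by (simp add: M3_iff)
    then have "\<phi> (\<lambda>i. 0) = \<phi> (\<lambda>i. 0) * \<phi> (\<lambda>i. 0)" "\<phi> (\<lambda>i. 0) \<noteq> 0"
      using T3_points_add[OF \<phi>] T3_points_nonzero[OF \<phi>] by fastforce+
    then show ?case by simp
  next
    case (Suc k)
    have "\<phi> (\<lambda>i. w i + int k * w i) = \<phi> w * \<phi> (\<lambda>i. int k * w i)"
      using T3_points_add[OF \<phi> w scale_mem_M3[OF w]] .
    then show ?case using Suc by (simp add: algebra_simps)
  qed
  show ?thesis
  proof (cases "c \<ge> 0")
    case True
    then show ?thesis using nat_scale[of "nat c"] by (simp add: power_int_def)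
  next
    case False
    define k where "k = nat (- c)"
    have c: "c = - int k" using False by (simp add: k_def)
    have "\<phi> (\<lambda>i. c * w i) * \<phi> w ^ k = \<phi> (\<lambda>i. c * w i + int k * w i)"
      using T3_points_add[OF \<phi> scale_mem_M3[OF w] scale_mem_M3[OF w]] nat_scale by simp
    also have "(\<lambda>i. c * w i + int k * w i) = (\<lambda>i. int 0 * w i)"
      using c by (simp flip: distrib_right)
    finally have "\<phi> (\<lambda>i. c * w i) * \<phi> w ^ k = 1" using nat_scale[of 0] by simp
    then have "\<phi> (\<lambda>i. c * w i) = inverse (\<phi> w ^ k)" by (metis inverse_unique mult.commute)
    then show ?thesis by (simp add: c power_int_minus power_int_of_nat)
  qed
qed

definition coords :: "((4 \<Rightarrow> int) \<Rightarrow> complex) \<Rightarrow> triple" where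
  "coords \<phi> = (\<phi> (basis_M3 0), \<phi> (basis_M3 1), \<phi> (basis_M3 2))"

definition character :: "triple \<Rightarrow> (4 \<Rightarrow> int) \<Rightarrow> complex" where
  "character = (\<lambda>(a, b, c) v. if v \<in> M3 then a powi v 0 * b powi v 1 * c powi v 2 else 1)"

lemma character_mem_T3_points:
  "a \<noteq> 0 \<Longrightarrow> b \<noteq> 0 \<Longrightarrow> c \<noteq> 0 \<Longrightarrow> character (a, b, c) \<in> T3_points"
  unfolding T3_points_def character_def using add_mem_M3 by (auto simp: power_int_add)

lemma coords_character: "a \<noteq> 0 \<Longrightarrow> b \<noteq> 0 \<Longrightarrow> c \<noteq> 0 \<Longrightarrow> coords (character (a, b, c)) = (a, b, c)"
  unfolding coords_def character_def using basis_M3_mem by (simp add: basis_M3_apply)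

lemma character_coords:
  assumes \<phi>: "\<phi> \<in> T3_points"
  shows "character (coords \<phi>) = \<phi>"
proof
  fix v
  show "character (coords \<phi>) v = \<phi> v"
  proof (cases "v \<in> M3")
    case False
    then show ?thesis using \<phi> by (simp add: character_def coords_def T3_points_def)
  next
    case True
    have mem: "(\<lambda>i. v 0 * basis_M3 0 i) \<in> M3" "(\<lambda>i. v 1 * basis_M3 1 i) \<in> M3"
      "(\<lambda>i. v 2 * basis_M3 2 i) \<in> M3"
      using scale_mem_M3 basis_M3_mem by blast+
    have "\<phi> v = \<phi> (\<lambda>i. v 0 * basis_M3 0 i) * (\<phi> (\<lambda>i. v 1 * basis_M3 1 i) * \<phi> (\<lambda>i. v 2 * basis_M3 2 i))"
      by (subst M3_basis_expansion[OF True])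
        (simp add: T3_points_add[OF \<phi> mem(1) add_mem_M3[OF mem(2,3)]] T3_points_add[OF \<phi> mem(2,3)])
    also have "\<dots> = \<phi> (basis_M3 0) powi v 0 * (\<phi> (basis_M3 1) powi v 1 * \<phi> (basis_M3 2) powi v 2)"
      using T3_points_scale[OF \<phi>] basis_M3_mem by simp
    finally show ?thesis using True by (simp add: character_def coords_def mult.assoc)
  qed
qed

lemma T3_carrier [simp]: "carrier T3 = T3_points"
  and T3_mult [simp]: "\<phi> \<otimes>\<^bsub>T3\<^esub> \<psi> = (\<lambda>v. \<phi> v * \<psi> v)"
  and T3_one [simp]: "\<one>\<^bsub>T3\<^esub> = (\<lambda>v. 1)"
  by (simp_all add: T3_def)

lemma group_T3: "group T3"
proof (rule groupI)
  fix \<phi> assume "\<phi> \<in> carrier T3"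
  then have "(\<lambda>v. inverse (\<phi> v)) \<in> T3_points" "(\<lambda>v. inverse (\<phi> v) * \<phi> v) = (\<lambda>v. 1)"
    by (auto simp: T3_points_def fun_eq_iff) (metis left_inverse one_neq_zero)
  then show "\<exists>\<psi>\<in>carrier T3. \<psi> \<otimes>\<^bsub>T3\<^esub> \<phi> = \<one>\<^bsub>T3\<^esub>" by auto
qed (auto simp: T3_points_def mult_ac)

lemma inv_T3: "\<phi> \<in> T3_points \<Longrightarrow> inv\<^bsub>T3\<^esub> \<phi> = (\<lambda>v. inverse (\<phi> v))"
  by (rule group.inv_equality[OF group_T3])
    (auto simp: T3_points_def fun_eq_iff, metis left_inverse one_neq_zero)

lemma coords_iso: "coords \<in> iso T3 torus3"
proof -
  have "coords \<in> hom T3 torus3"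
    using T3_points_nonzero basis_M3_mem
    by (intro homI) (auto simp: coords_def torus3_def T3_points_add)
  moreover have "bij_betw coords T3_points (carrier torus3)"
  proof (rule bij_betw_byWitness[where f' = character])
    show "\<forall>\<phi>\<in>T3_points. character (coords \<phi>) = \<phi>" using character_coords by blast
    show "\<forall>x\<in>carrier torus3. coords (character x) = x"
      by (auto simp: torus3_def coords_character)
    show "coords ` T3_points \<subseteq> carrier torus3"
      using T3_points_nonzero basis_M3_mem by (auto simp: coords_def torus3_def)
    show "character ` carrier torus3 \<subseteq> T3_points"
      by (auto simp: torus3_def character_mem_T3_points)
  qed
  ultimately show ?thesis by (simp add: iso_def)
qed

lemma coords_inv_T3: "\<phi> \<in> T3_points \<Longrightarrow> coords (inv\<^bsub>T3\<^esub> \<phi>) = tinverse (coords \<phi>)"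
  by (simp add: inv_T3 coords_def)

lemma tact_permutation:
  assumes s: "s permutes UNIV" and v: "v \<in> M3"
  shows "tact (restrict (mact s 1) M3) \<phi> v = \<phi> (v \<circ> s)"
proof -
  let ?g = "restrict (mact s 1) M3"
  have inv_s: "inv_into UNIV s (s j) = j" "s (inv_into UNIV s j) = j" for j
    using permutes_inverses[OF s] by (simp_all add: inv_def)
  have "inj_on ?g M3"
  proof (rule inj_onI)
    fix x y assume "x \<in> M3" "y \<in> M3" "?g x = ?g y"
    then have "x (inv_into UNIV s (s j)) = y (inv_into UNIV s (s j))" for j
      by (simp add: mact_def fun_eq_iff)
    then show "x = y" by (simp add: inv_s fun_eq_iff)
  qed
  moreover have "v \<circ> s \<in> M3" using permute_mem_M3[OF s v] .
  moreover have "?g (v \<circ> s) = v" using calculation(2) inv_s by (simp add: mact_def fun_eq_iff)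
  ultimately have "inv_into M3 ?g v = v \<circ> s" using inv_into_f_eq by metis
  then show ?thesis using v by (simp add: tact_def)
qed

lemma coords_tact_permutation:
  assumes "s permutes UNIV" "\<phi> \<in> T3_points"
  shows "coords (tact (restrict (mact s 1) M3) \<phi>)
    = (character (coords \<phi>) (basis_M3 0 \<circ> s), character (coords \<phi>) (basis_M3 1 \<circ> s),
       character (coords \<phi>) (basis_M3 2 \<circ> s))"
proof -
  have "tact (restrict (mact s 1) M3) \<phi> (basis_M3 i) = character (coords \<phi>) (basis_M3 i \<circ> s)"
    if "basis_M3 i \<in> M3" for i
    using tact_permutation[OF assms(1) that] character_coords[OF assms(2)] by simp
  then show ?thesis using basis_M3_mem by (simp add: coords_def[of "tact _ \<phi>"])
qed

definition perm_012 :: "4 \<Rightarrow> 4" where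
  "perm_012 = transpose 0 1 \<circ> transpose 1 2"

definition perm_03_12 :: "4 \<Rightarrow> 4" where
  "perm_03_12 = transpose 0 3 \<circ> transpose 1 2"

lemma perm_012_apply: "perm_012 0 = 1" "perm_012 1 = 2" "perm_012 2 = 0" "perm_012 3 = 3"
  by (simp_all add: perm_012_def)

lemma perm_03_12_apply: "perm_03_12 0 = 3" "perm_03_12 1 = 2" "perm_03_12 2 = 1" "perm_03_12 3 = 0"
  by (simp_all add: perm_03_12_def)

lemma even_perm_012: "perm_012 permutes UNIV" "evenperm perm_012"
  and even_perm_03_12: "perm_03_12 permutes UNIV" "evenperm perm_03_12"
  unfolding perm_012_def perm_03_12_def
  by (auto intro!: permutes_compose permutes_swap_id
      simp: evenperm_comp permutation_swap_id evenperm_swap)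

lemma coords_tact_012:
  "\<phi> \<in> T3_points \<Longrightarrow> coords (tact (restrict (mact perm_012 1) M3) \<phi>) = tcycle (coords \<phi>)"
  unfolding coords_tact_permutation[OF even_perm_012(1)]
  using permute_mem_M3[OF even_perm_012(1)] basis_M3_mem
  by (simp add: character_def coords_def perm_012_apply basis_M3_apply)

lemma coords_tact_03_12:
  "\<phi> \<in> T3_points \<Longrightarrow> coords (tact (restrict (mact perm_03_12 1) M3) \<phi>) = tflip (coords \<phi>)"
  unfolding coords_tact_permutation[OF even_perm_03_12(1)]
  using permute_mem_M3[OF even_perm_03_12(1)] basis_M3_mem
  by (simp add: character_def coords_def
      perm_03_12_apply basis_M3_apply power_int_minus mult_ac)

lemma stable_triples_coords:
  assumes G: "subgroup G T3" "finite G" and stable: "\<forall>g\<in>W3A. \<forall>\<phi>\<in>G. tact g \<phi> \<in> G"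
  shows "stable_triples (coords ` G)"
proof
  show "finite (coords ` G)" using G(2) by simp
  show "(1, 1, 1) \<in> coords ` G"
    using subgroup.one_closed[OF G(1)] by (force simp: coords_def)
  fix x y assume "x \<in> coords ` G" "y \<in> coords ` G"
  then obtain \<phi> \<psi> where "\<phi> \<in> G" "\<psi> \<in> G" "x = coords \<phi>" "y = coords \<psi>" by blast
  moreover have "coords (\<phi> \<otimes>\<^bsub>T3\<^esub> \<psi>) = tmult (coords \<phi>) (coords \<psi>)" by (simp add: coords_def)
  ultimately show "tmult x y \<in> coords ` G"
    using subgroup.m_closed[OF G(1)] by (metis image_eqI)
next
  fix x assume "x \<in> coords ` G"
  then obtain \<phi> where \<phi>: "\<phi> \<in> G" "x = coords \<phi>" by blast
  then have "\<phi> \<in> T3_points" using subgroup.subset[OF G(1)] by auto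
  have W3A: "restrict (mact perm_012 1) M3 \<in> W3A" "restrict (mact perm_03_12 1) M3 \<in> W3A"
    unfolding W3A_def using even_perm_012 even_perm_03_12 by blast+
  show "tinverse x \<in> coords ` G"
    using subgroup.m_inv_closed[OF G(1) \<phi>(1)] coords_inv_T3[OF \<open>\<phi> \<in> T3_points\<close>] \<phi>(2)
    by (metis image_eqI)
  have "tact (restrict (mact perm_012 1) M3) \<phi> \<in> G" using stable W3A(1) \<phi>(1) by blast
  then show "tcycle x \<in> coords ` G"
    using coords_tact_012[OF \<open>\<phi> \<in> T3_points\<close>] \<phi>(2) by (metis image_eqI)
  have "tact (restrict (mact perm_03_12 1) M3) \<phi> \<in> G" using stable W3A(2) \<phi>(1) by blast
  then show "tflip x \<in> coords ` G"
    using coords_tact_03_12[OF \<open>\<phi> \<in> T3_points\<close>] \<phi>(2) by (metis image_eqI)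
next
  fix a b c assume "(a, b, c) \<in> coords ` G"
  then obtain \<phi> where "\<phi> \<in> G" "(a, b, c) = coords \<phi>" by blast
  then show "a \<noteq> 0 \<and> b \<noteq> 0 \<and> c \<noteq> 0"
    using subgroup.subset[OF G(1)] T3_points_nonzero basis_M3_mem by (auto simp: coords_def)
qed

lemma stable_subgroup_T3_iso:
  assumes G: "subgroup G T3" "finite G" and stable: "\<forall>g\<in>W3A. \<forall>\<phi>\<in>G. tact g \<phi> \<in> G"
  obtains n m where "0 < m" "m dvd n" "n dvd 4 * m"
    "T3\<lparr>carrier := G\<rparr> \<cong> DirProd (mu n) (DirProd (mu n) (mu m))"
proof -
  interpret stable_triples "coords ` G" using stable_triples_coords[OF assms] .
  obtain n m where "0 < m" "m dvd n" "n dvd 4 * m" and image: "coords ` G = root_triples n m"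
    using classification by blast
  define k where "k = n div m"
  have n: "n = k * m" using \<open>m dvd n\<close> by (simp add: k_def)
  have "0 < k" using n \<open>n dvd 4 * m\<close> \<open>0 < m\<close> by (cases "k = 0") auto
  have "T3\<lparr>carrier := G\<rparr> \<cong> torus3\<lparr>carrier := coords ` G\<rparr>"
    using iso_restrict[OF coords_iso group_T3 group_torus3 G(1)] by (rule is_isoI)
  also have "torus3\<lparr>carrier := coords ` G\<rparr> \<cong> DirProd (mu n) (DirProd (mu n) (mu m))"
    using is_isoI[OF zeta_triple_iso[OF n \<open>0 < m\<close> \<open>0 < k\<close>]] image
    by (simp add: group.iso_sym DirProd_group)
  finally show ?thesis using that \<open>0 < m\<close> \<open>m dvd n\<close> \<open>n dvd 4 * m\<close> by blast
qed

theorem corollary7p3: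
  fixes W :: "((4 \<Rightarrow> int) \<Rightarrow> (4 \<Rightarrow> int)) set"
    and G :: "((4 \<Rightarrow> int) \<Rightarrow> complex) set"
  assumes "is_subgroup_W3 W"
    and "W3A \<subseteq> W"
    and "subgroup G T3"
    and "finite G"
    and "\<forall>g\<in>W. \<forall>\<phi>\<in>G. tact g \<phi> \<in> G"
  shows "\<exists>n::nat. 0 < n \<and>
     (T3\<lparr>carrier := G\<rparr> \<cong> DirProd (mu n) (DirProd (mu n) (mu n))
      \<or> (even n \<and> T3\<lparr>carrier := G\<rparr> \<cong> DirProd (mu n) (DirProd (mu n) (mu (n div 2))))
      \<or> (4 dvd n \<and> T3\<lparr>carrier := G\<rparr> \<cong> DirProd (mu n) (DirProd (mu n) (mu (n div 4)))))"
proof -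
  have "\<forall>g\<in>W3A. \<forall>\<phi>\<in>G. tact g \<phi> \<in> G" using assms(2,5) by blast
  then obtain n m where "0 < m" "m dvd n" "n dvd 4 * m"
    and iso: "T3\<lparr>carrier := G\<rparr> \<cong> DirProd (mu n) (DirProd (mu n) (mu m))"
    using stable_subgroup_T3_iso assms(3,4) by metis
  have "n = m \<or> n = 2 * m \<or> n = 4 * m"
    using dvd_four_multiple_cases \<open>0 < m\<close> \<open>m dvd n\<close> \<open>n dvd 4 * m\<close> .
  then show ?thesis
  proof (elim disjE)
    assume "n = m"
    then have "T3\<lparr>carrier := G\<rparr> \<cong> DirProd (mu n) (DirProd (mu n) (mu n))" using iso by simp
    then show ?thesis using \<open>0 < m\<close> \<open>n = m\<close> by blast
  next
    assume "n = 2 * m"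
    then have "T3\<lparr>carrier := G\<rparr> \<cong> DirProd (mu n) (DirProd (mu n) (mu (n div 2)))"
      using iso by simp
    moreover have "0 < n" "even n" using \<open>n = 2 * m\<close> \<open>0 < m\<close> by simp_all
    ultimately show ?thesis by blast
  next
    assume "n = 4 * m"
    then have "T3\<lparr>carrier := G\<rparr> \<cong> DirProd (mu n) (DirProd (mu n) (mu (n div 4)))"
      using iso by simp
    moreover have "0 < n" "4 dvd n" using \<open>n = 4 * m\<close> \<open>0 < m\<close> by simp_all
    ultimately show ?thesis by blast
  qed
qed

end
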